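(* Let $[\xi_1\to\xi_2\to\xi_1]$ be a simple heteroclinic cycle in $\mathbb{R}^4$ with two nodes. Then $\xi_1$ and $\xi_2$ lie in the same one-dimensional linear subspace of $\mathbb{R}^4$.
   Context: Setting: $\dot y=f(y)$ on $\mathbb{R}^4$ with $f$ equivariant under a finite group $\Gamma\subset O(4)$. Each connection $[\xi_j\to\xi_{j+1}]\subset W^u(\xi_j)\cap W^s(\xi_{j+1})$ is a saddle-sink connection in a fixed-point subspace $P_j=\mathrm{Fix}(\Sigma_j)$, $\Sigma_j\subset\Gamma$ an isotropy subgroup, and $L_j=P_{j-1}\cap P_j$. A robust cycle $X\subset\mathbb{R}^4\setminus\{0\}$ is simple if $\dim P_j=2$ for each $j$, $X$ meets each connected component of $L_j\setminus\{0\}$ in at most one point, and the linearizations at its equilibria have no double eigenvalues. *)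

theory Defs
  imports "HOL-Analysis.Analysis" "HOL-Computational_Algebra.Polynomial"
begin

type_synonym R4 = "real^4"

definition finite_orth_group :: "(real^4^4) set \<Rightarrow> bool" where
  "finite_orth_group G \<longleftrightarrow> finite G \<and> mat 1 \<in> G \<and>
     (\<forall>g\<in>G. orthogonal_matrix g) \<and> (\<forall>g\<in>G. \<forall>h\<in>G. g ** h \<in> G) \<and>
     (\<forall>g\<in>G. matrix_inv g \<in> G)"

definition equivariant :: "(real^4^4) set \<Rightarrow> (R4 \<Rightarrow> R4) \<Rightarrow> bool" where
  "equivariant G f \<longleftrightarrow> (\<forall>g\<in>G. \<forall>y. f (g *v y) = g *v f y)"

definition isotropy_subgroup :: "(real^4^4) set \<Rightarrow> (real^4^4) set \<Rightarrow> bool" where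
  "isotropy_subgroup G S \<longleftrightarrow> (\<exists>x::R4. S = {g\<in>G. g *v x = x})"

definition Fix :: "(real^4^4) set \<Rightarrow> R4 set" where
  "Fix S = {y. \<forall>g\<in>S. g *v y = y}"

definition solution_on :: "(R4 \<Rightarrow> R4) \<Rightarrow> real set \<Rightarrow> (real \<Rightarrow> R4) \<Rightarrow> bool" where
  "solution_on f T x \<longleftrightarrow> (\<forall>t\<in>T. (x has_vector_derivative f (x t)) (at t within T))"

definition unstable_set :: "(R4 \<Rightarrow> R4) \<Rightarrow> R4 \<Rightarrow> R4 set" where
  "unstable_set f \<xi> = {y. \<exists>x. solution_on f {..0} x \<and> x 0 = y \<and> (x \<longlongrightarrow> \<xi>) at_bot}"

definition stable_set :: "(R4 \<Rightarrow> R4) \<Rightarrow> R4 \<Rightarrow> R4 set" where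
  "stable_set f \<xi> = {y. \<exists>x. solution_on f {0..} x \<and> x 0 = y \<and> (x \<longlongrightarrow> \<xi>) at_top}"

definition union_of_trajectories :: "(R4 \<Rightarrow> R4) \<Rightarrow> R4 set \<Rightarrow> bool" where
  "union_of_trajectories f K \<longleftrightarrow>
     (\<forall>y\<in>K. \<exists>x. solution_on f UNIV x \<and> x 0 = y \<and> range x \<subseteq> K)"

text \<open>(mu + i nu) is an eigenvalue of the real linear map J restricted to the (J-invariant)
  subspace P: there is a nonzero complex eigenvector a + i b with a, b in P.\<close>
definition restr_eigenvalue :: "(R4 \<Rightarrow> R4) \<Rightarrow> R4 set \<Rightarrow> real \<Rightarrow> real \<Rightarrow> bool" where
  "restr_eigenvalue J P \<mu> \<nu> \<longleftrightarrow> (\<exists>a b. a \<in> P \<and> b \<in> P \<and> (a \<noteq> 0 \<or> b \<noteq> 0) \<and>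
      J a = \<mu> *\<^sub>R a - \<nu> *\<^sub>R b \<and> J b = \<nu> *\<^sub>R a + \<mu> *\<^sub>R b)"

definition saddle_in :: "(R4 \<Rightarrow> R4) \<Rightarrow> (R4 \<Rightarrow> R4 \<Rightarrow>\<^sub>L R4) \<Rightarrow> R4 set \<Rightarrow> R4 \<Rightarrow> bool" where
  "saddle_in f f' P \<xi> \<longleftrightarrow> \<xi> \<in> P \<and> f \<xi> = 0 \<and>
     (\<forall>\<mu> \<nu>. restr_eigenvalue (blinfun_apply (f' \<xi>)) P \<mu> \<nu> \<longrightarrow> \<mu> \<noteq> 0) \<and>
     (\<exists>\<mu> \<nu>. restr_eigenvalue (blinfun_apply (f' \<xi>)) P \<mu> \<nu> \<and> \<mu> > 0) \<and>
     (\<exists>\<mu> \<nu>. restr_eigenvalue (blinfun_apply (f' \<xi>)) P \<mu> \<nu> \<and> \<mu> < 0)"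

definition sink_in :: "(R4 \<Rightarrow> R4) \<Rightarrow> (R4 \<Rightarrow> R4 \<Rightarrow>\<^sub>L R4) \<Rightarrow> R4 set \<Rightarrow> R4 \<Rightarrow> bool" where
  "sink_in f f' P \<xi> \<longleftrightarrow> \<xi> \<in> P \<and> f \<xi> = 0 \<and>
     (\<forall>\<mu> \<nu>. restr_eigenvalue (blinfun_apply (f' \<xi>)) P \<mu> \<nu> \<longrightarrow> \<mu> < 0)"

definition charpoly4 :: "real^4^4 \<Rightarrow> complex poly" where
  "charpoly4 M = det (\<chi> i k. (if i = k then [:0, 1:] else 0) - [:complex_of_real (M $ i $ k):])"

definition no_double_eigenvalues :: "real^4^4 \<Rightarrow> bool" where
  "no_double_eigenvalues M \<longleftrightarrow> rsquarefree (charpoly4 M)"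

text \<open>Cycle with m nodes xi 0, ..., xi (m-1) (indices mod m). The j-th connection K j
  goes from xi j to xi (j+1 mod m) inside P j = Fix (S j).\<close>
definition cycle_set :: "nat \<Rightarrow> (nat \<Rightarrow> R4) \<Rightarrow> (nat \<Rightarrow> R4 set) \<Rightarrow> R4 set" where
  "cycle_set m \<xi> K = \<xi> ` {..<m} \<union> (\<Union>j<m. K j)"

definition robust_heteroclinic_cycle ::
  "(real^4^4) set \<Rightarrow> (R4 \<Rightarrow> R4) \<Rightarrow> (R4 \<Rightarrow> R4 \<Rightarrow>\<^sub>L R4) \<Rightarrow> nat \<Rightarrow> (nat \<Rightarrow> R4)
     \<Rightarrow> (nat \<Rightarrow> (real^4^4) set) \<Rightarrow> (nat \<Rightarrow> R4 set) \<Rightarrow> bool" where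
  "robust_heteroclinic_cycle G f f' m \<xi> S K \<longleftrightarrow>
     m \<ge> 2 \<and> inj_on \<xi> {..<m} \<and>
     cycle_set m \<xi> K \<subseteq> - {0} \<and>
     (\<forall>j<m. isotropy_subgroup G (S j) \<and>
        K j \<noteq> {} \<and> union_of_trajectories f (K j) \<and>
        K j \<subseteq> unstable_set f (\<xi> j) \<inter> stable_set f (\<xi> ((j + 1) mod m)) \<and>
        K j \<subseteq> Fix (S j) \<and>
        saddle_in f f' (Fix (S j)) (\<xi> j) \<and>
        sink_in f f' (Fix (S j)) (\<xi> ((j + 1) mod m)))"

definition Lsub :: "nat \<Rightarrow> (nat \<Rightarrow> (real^4^4) set) \<Rightarrow> nat \<Rightarrow> R4 set" where
  "Lsub m S j = Fix (S ((j + m - 1) mod m)) \<inter> Fix (S j)"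

definition simple_heteroclinic_cycle ::
  "(real^4^4) set \<Rightarrow> (R4 \<Rightarrow> R4) \<Rightarrow> (R4 \<Rightarrow> R4 \<Rightarrow>\<^sub>L R4) \<Rightarrow> nat \<Rightarrow> (nat \<Rightarrow> R4)
     \<Rightarrow> (nat \<Rightarrow> (real^4^4) set) \<Rightarrow> (nat \<Rightarrow> R4 set) \<Rightarrow> bool" where
  "simple_heteroclinic_cycle G f f' m \<xi> S K \<longleftrightarrow>
     robust_heteroclinic_cycle G f f' m \<xi> S K \<and>
     (\<forall>j<m. dim (Fix (S j)) = 2) \<and>
     (\<forall>j<m. \<forall>C\<in>components (Lsub m S j - {0}).
        \<forall>x\<in>cycle_set m \<xi> K \<inter> C. \<forall>y\<in>cycle_set m \<xi> K \<inter> C. x = y) \<and>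
     (\<forall>j<m. no_double_eigenvalues (matrix (blinfun_apply (f' (\<xi> j)))))"

end

theory Submission
  imports Defs
begin

text \<open>Both nodes are equilibria lying in both fixed-point planes, so they lie in their
  intersection. The planes differ, because the node that is a saddle in one of them is a sink
  in the other; two distinct planes meet in at most a line, and the nodes are nonzero.\<close>

lemma subspace_Fix: "subspace (Fix S)"
  unfolding subspace_def Fix_def
  by (auto simp: matrix_vector_right_distrib matrix_vector_mult_scaleR)

lemma dim_inter_less_if_neq:
  fixes A B :: "'a::euclidean_space set"
  assumes "subspace A" "subspace B" "dim A = dim B" "A \<noteq> B"
  shows "dim (A \<inter> B) < dim A"
proof (rule ccontr)
  assume "\<not> dim (A \<inter> B) < dim A"
  then have "dim A \<le> dim (A \<inter> B)" "dim B \<le> dim (A \<inter> B)"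
    using assms(3) by auto
  then have "A \<inter> B = A" "A \<inter> B = B"
    using subspace_dim_equal assms(1,2) subspace_inter by (metis Int_lower1 Int_lower2)+
  with assms(4) show False by simp
qed

lemma saddle_not_sink: "saddle_in f f' P \<xi> \<Longrightarrow> \<not> sink_in f f' P \<xi>"
  unfolding saddle_in_def sink_in_def by force

lemma two_node_cycle_planes:
  assumes "robust_heteroclinic_cycle G f f' 2 \<xi> S K"
  shows "Fix (S 0) \<noteq> Fix (S 1)"
    and "\<xi> 0 \<in> Fix (S 0) \<inter> Fix (S 1)" "\<xi> 1 \<in> Fix (S 0) \<inter> Fix (S 1)"
    and "\<xi> 0 \<noteq> 0"
proof -
  have saddle: "saddle_in f f' (Fix (S 0)) (\<xi> 0)" "saddle_in f f' (Fix (S 1)) (\<xi> 1)"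
   and sink: "sink_in f f' (Fix (S 0)) (\<xi> 1)" "sink_in f f' (Fix (S 1)) (\<xi> 0)"
    using assms unfolding robust_heteroclinic_cycle_def by (auto dest: spec[of _ 0] spec[of _ 1])
  show "Fix (S 0) \<noteq> Fix (S 1)"
    using saddle(1) sink(2) saddle_not_sink by metis
  show "\<xi> 0 \<in> Fix (S 0) \<inter> Fix (S 1)" "\<xi> 1 \<in> Fix (S 0) \<inter> Fix (S 1)"
    using saddle sink unfolding saddle_in_def sink_in_def by auto
  show "\<xi> 0 \<noteq> 0"
    using assms unfolding robust_heteroclinic_cycle_def cycle_set_def by auto
qed

theorem mainTheorem2:
  fixes G :: "(real^4^4) set" and f :: "real^4 \<Rightarrow> real^4"
    and f' :: "real^4 \<Rightarrow> ((real^4) \<Rightarrow>\<^sub>L (real^4))"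
    and \<xi> :: "nat \<Rightarrow> real^4" and S :: "nat \<Rightarrow> (real^4^4) set" and K :: "nat \<Rightarrow> (real^4) set"
  assumes "finite_orth_group G"
    and "equivariant G f"
    and "\<And>y. (f has_derivative blinfun_apply (f' y)) (at y)"
    and "continuous_on UNIV f'"
    and "simple_heteroclinic_cycle G f f' 2 \<xi> S K"
  shows "\<exists>V :: (real^4) set. subspace V \<and> dim V = 1 \<and> \<xi> 0 \<in> V \<and> \<xi> 1 \<in> V"
proof -
  have cycle: "robust_heteroclinic_cycle G f f' 2 \<xi> S K"
    and planes: "dim (Fix (S 0)) = 2" "dim (Fix (S 1)) = 2"
    using assms(5) unfolding simple_heteroclinic_cycle_def by auto
  define L where "L = Fix (S 0) \<inter> Fix (S 1)"
  have L: "subspace L" "\<xi> 0 \<in> L" "\<xi> 1 \<in> L"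
    using two_node_cycle_planes(2,3)[OF cycle] unfolding L_def
    by (auto intro: subspace_inter subspace_Fix)
  have "dim L < 2"
    using dim_inter_less_if_neq[OF subspace_Fix subspace_Fix _ two_node_cycle_planes(1)[OF cycle]]
      planes unfolding L_def by simp
  moreover have "dim L \<noteq> 0"
    using L(2) two_node_cycle_planes(4)[OF cycle] by auto
  ultimately have "dim L = 1" by linarith
  with L show ?thesis by blast
qed

end
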